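(* For every positive integer $n$, $$\sum_{\mathbf a\in\mathsf{PF}_n} t^{\operatorname{run}(\mathbf a)}=\sum_{\mathbf a\in\mathsf{RW}_n} t^{\operatorname{run}(\mathbf a)}.$$
   Context: Let $[n]=\{1,\dots,n\}$ and $\mathbf a=(a_1,\dots,a_n)\in[n]^n$. If $1\in\{a_1,\dots,a_n\}$, $\operatorname{run}(\mathbf a)=\max\{i\in[n]:[i]\subseteq\{a_1,\dots,a_n\}\}$; otherwise $\operatorname{run}(\mathbf a)=0$. $\mathsf{PF}_n$ is the set of $\mathbf a\in[n]^n$ with $|\{j:a_j\le i\}|\ge i$ for all $i\in[n]$ (parking functions). $\mathsf{RW}_n$ is the set of rook words: $\mathbf a\in[n]^n$ with $a_1\le\operatorname{run}(\mathbf a)$. *)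

theory Defs
  imports Main "HOL-Library.FuncSet"
begin

text \<open>Words a = (a_1,...,a_n) in [n]^n are represented as functions on {1..n}
  with values in {1..n}, undefined outside {1..n} (extensional functions).\<close>

definition words :: "nat \<Rightarrow> (nat \<Rightarrow> nat) set" where
  "words n = ({1..n} \<rightarrow>\<^sub>E {1..n})"

definition run :: "nat \<Rightarrow> (nat \<Rightarrow> nat) \<Rightarrow> nat" where
  "run n a = (if 1 \<in> a ` {1..n}
              then Max {i \<in> {1..n}. {1..i} \<subseteq> a ` {1..n}}
              else 0)"

definition PF :: "nat \<Rightarrow> (nat \<Rightarrow> nat) set" where
  "PF n = {a \<in> words n. \<forall>i \<in> {1..n}. card {j \<in> {1..n}. a j \<le> i} \<ge> i}"

definition RW :: "nat \<Rightarrow> (nat \<Rightarrow> nat) set" where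
  "RW n = {a \<in> words n. a 1 \<le> run n a}"

end

theory Submission
  imports Defs "HOL-Combinatorics.Transposition"
begin

text \<open>Fix \<open>1 \<le> r < n\<close>. Words with run \<open>r\<close> are among the covering words, whose values include
  \<open>1..r\<close>, and rotating the values \<open>r+1..n\<close> cyclically (\<open>n - r\<close> rotations) permutes the
  covering words. Hence \<open>n - r\<close> times the number of parking functions (rook words) with run \<open>r\<close>
  is the sum over covering words \<open>a\<close> of the number of rotations of \<open>a\<close> landing there.
  By the cycle lemma, applied to the walk whose up-steps are the multiplicities of the values
  \<open>r+1..n\<close>, exactly \<open>k - r\<close> rotations give parking functions with run \<open>r\<close>, where \<open>k\<close> is the
  number of letters of \<open>a\<close> that are at most \<open>r\<close>. A rotation gives a rook word with run \<open>r\<close>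
  iff \<open>a\<^sub>1 \<le> r\<close> and \<open>r+1\<close> is rotated onto a value missing from \<open>a\<close>, which happens for
  \<open>n - |a([n])|\<close> rotations. Transposing positions shows that the \<open>k\<close> sum to
  \<open>n \<cdot> #{a. a\<^sub>1 \<le> r}\<close>, and interchanging the values \<open>u \<le> r\<close> and \<open>a\<^sub>1\<close> shows that
  \<open>|a([n])|\<close> summed over \<open>a\<^sub>1 \<le> r\<close> is \<open>r\<close> times the number of covering words, so both
  counts agree. For \<open>r = 0\<close> both sets are empty and for \<open>r = n\<close> both consist of all words
  with run \<open>n\<close>.\<close>

subsection \<open>A cycle lemma for integer walks\<close>

primrec prefix_min :: "(nat \<Rightarrow> int) \<Rightarrow> nat \<Rightarrow> int" where
  "prefix_min F 0 = F 0"
| "prefix_min F (Suc x) = min (prefix_min F x) (F (Suc x))"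

lemma prefix_min_le: "j \<le> x \<Longrightarrow> prefix_min F x \<le> F j"
proof (induction x)
  case (Suc x)
  then show ?case by (cases "j = Suc x") auto
qed simp

lemma prefix_min_attained: "\<exists>j\<le>x. prefix_min F x = F j"
proof (induction x)
  case (Suc x)
  then obtain j where "j \<le> x" "prefix_min F x = F j" by blast
  then show ?case by (cases "prefix_min F x \<le> F (Suc x)") (auto simp: min_def intro: le_SucI)
qed simp

lemma prefix_min_Suc_less_iff:
  "prefix_min F (Suc x) < prefix_min F x \<longleftrightarrow> (\<forall>j\<le>x. F (Suc x) < F j)"
proof
  assume "prefix_min F (Suc x) < prefix_min F x"
  then have "F (Suc x) < prefix_min F x" by (simp add: min_def split: if_splits)
  then show "\<forall>j\<le>x. F (Suc x) < F j" using prefix_min_le by (meson less_le_trans)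
next
  assume "\<forall>j\<le>x. F (Suc x) < F j"
  moreover obtain j where "j \<le> x" "prefix_min F x = F j" using prefix_min_attained by blast
  ultimately show "prefix_min F (Suc x) < prefix_min F x" by (auto simp: min_def)
qed

text \<open>A walk with steps \<open>\<ge> -1\<close> lowers its running minimum by exactly one at each new
  minimum.\<close>

lemma card_prefix_min_drops:
  assumes step: "\<And>x. F (Suc x) \<ge> F x - 1" and "A \<le> B"
  shows "int (card {T \<in> {A<..B}. prefix_min F T < prefix_min F (T - 1)})
           = prefix_min F A - prefix_min F B"
  using assms(2)
proof (induction B)
  case (Suc B)
  show ?case
  proof (cases "A = Suc B")
    case False
    then have AB: "A \<le> B" using Suc.prems by simp
    have split: "{T \<in> {A<..Suc B}. prefix_min F T < prefix_min F (T - 1)} =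
      {T \<in> {A<..B}. prefix_min F T < prefix_min F (T - 1)} \<union>
      (if prefix_min F (Suc B) < prefix_min F B then {Suc B} else {})"
      using AB by (auto simp: le_Suc_eq)
    have "prefix_min F (Suc B) \<ge> prefix_min F B - 1"
      using step[of B] prefix_min_le[of B B F] by (simp add: min_def)
    then show ?thesis
      using Suc.IH[OF AB] unfolding split by (auto simp: card_insert_if)
  qed simp
qed simp

lemma prefix_min_periodic:
  assumes per: "\<And>x. F (x + L) = F x - c" and "c \<ge> 0"
  shows "prefix_min F (L + L) = prefix_min F L - c"
proof (rule antisym)
  obtain j where j: "j \<le> L" "prefix_min F L = F j" using prefix_min_attained by blast
  have "prefix_min F (L + L) \<le> F (j + L)" using j by (intro prefix_min_le) simp
  then show "prefix_min F (L + L) \<le> prefix_min F L - c" using j per[of j] by simp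
next
  obtain j where j: "j \<le> L + L" "prefix_min F (L + L) = F j" using prefix_min_attained by blast
  show "prefix_min F L - c \<le> prefix_min F (L + L)"
  proof (cases "j \<le> L")
    case True
    then show ?thesis using j prefix_min_le[of j L F] \<open>c \<ge> 0\<close> by simp
  next
    case False
    then have "j = (j - L) + L" "j - L \<le> L" using j by auto
    then have "prefix_min F (L + L) = F (j - L) - c" using j per[of "j - L"] by simp
    then show ?thesis using prefix_min_le[OF \<open>j - L \<le> L\<close>, of F] by simp
  qed
qed

lemma periodic_walk_new_min_iff:
  fixes F :: "nat \<Rightarrow> int"
  assumes step: "\<And>x. F (Suc x) \<ge> F x - 1" and per: "\<And>x. F (x + L) = F x - c"
    and "c \<ge> 0" "d < L"
  shows "(\<forall>j\<le>d + L. F (Suc (d + L)) < F j) \<longleftrightarrow>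
           F (Suc d) < F d \<and> (\<forall>u\<in>{1..L}. F d - c \<le> F (d + u))"
proof
  assume new: "\<forall>j\<le>d + L. F (Suc (d + L)) < F j"
  then have down: "F (Suc d) < F d" using per[of d] per[of "Suc d"] by force
  then have "F (Suc d) = F d - 1" using step[of d] by linarith
  then have "F d - c \<le> F (d + u)" if "u \<in> {1..L}" for u
    using new[rule_format, of "d + u"] that per[of "Suc d"] by simp
  with down show "F (Suc d) < F d \<and> (\<forall>u\<in>{1..L}. F d - c \<le> F (d + u))" by blast
next
  assume H: "F (Suc d) < F d \<and> (\<forall>u\<in>{1..L}. F d - c \<le> F (d + u))"
  then have down: "F (Suc (d + L)) = F d - c - 1"
    using step[of d] per[of "Suc d"] by simp
  show "\<forall>j\<le>d + L. F (Suc (d + L)) < F j"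
  proof (intro allI impI)
    fix j assume j: "j \<le> d + L"
    show "F (Suc (d + L)) < F j"
    proof (cases "Suc d \<le> j")
      case True
      then have "F d - c \<le> F (d + (j - d))" using j by (intro H[THEN conjunct2, rule_format]) auto
      then show ?thesis using True down by simp
    next
      case False
      then have "F d - c \<le> F (d + (j + L - d))"
        using \<open>d < L\<close> by (intro H[THEN conjunct2, rule_format]) auto
      moreover have "d + (j + L - d) = j + L" using \<open>d < L\<close> by simp
      ultimately show ?thesis using per[of j] down \<open>c \<ge> 0\<close> by simp
    qed
  qed
qed

text \<open>The starting points counted are exactly the times in the second period at
  which the walk reaches a new minimum, and there are \<open>h\<close> of those since the running minimum
  drops by \<open>h\<close> over that period.\<close>

lemma cycle_lemma:
  fixes F :: "nat \<Rightarrow> int"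
  assumes step: "\<And>x. F (Suc x) \<ge> F x - 1" and per: "\<And>x. F (x + L) = F x - int h"
  shows "card {d \<in> {..<L}. F (Suc d) < F d \<and> (\<forall>u\<in>{1..L}. F d - int h \<le> F (d + u))} = h"
proof -
  have new_min_iff: "F (Suc d) < F d \<and> (\<forall>u\<in>{1..L}. F d - int h \<le> F (d + u))
      \<longleftrightarrow> prefix_min F (Suc (d + L)) < prefix_min F (d + L)" if "d < L" for d
    using periodic_walk_new_min_iff[of F L "int h" d, OF step per _ that] prefix_min_Suc_less_iff[of F "d + L"]
    by (simp del: prefix_min.simps)
  define drops where "drops = {T \<in> {L<..L + L}. prefix_min F T < prefix_min F (T - 1)}"
  have "{d \<in> {..<L}. F (Suc d) < F d \<and> (\<forall>u\<in>{1..L}. F d - int h \<le> F (d + u))}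
      = (\<lambda>T. T - Suc L) ` drops"
  proof (rule set_eqI)
    fix d
    have "d \<in> (\<lambda>T. T - Suc L) ` drops \<longleftrightarrow> Suc (d + L) \<in> drops"
    proof
      assume "d \<in> (\<lambda>T. T - Suc L) ` drops"
      then obtain T where "T \<in> drops" "d = T - Suc L" by blast
      moreover have "L < T" using \<open>T \<in> drops\<close> unfolding drops_def by (simp only: mem_Collect_eq greaterThanAtMost_iff)
      ultimately have "T = Suc (d + L)" by linarith
      with \<open>T \<in> drops\<close> show "Suc (d + L) \<in> drops" by simp
    next
      assume "Suc (d + L) \<in> drops"
      then show "d \<in> (\<lambda>T. T - Suc L) ` drops" by (rule rev_image_eqI) simp
    qed
    then show "d \<in> {d \<in> {..<L}. F (Suc d) < F d \<and> (\<forall>u\<in>{1..L}. F d - int h \<le> F (d + u))}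
        \<longleftrightarrow> d \<in> (\<lambda>T. T - Suc L) ` drops"
      using new_min_iff[of d] unfolding drops_def by (simp del: prefix_min.simps) linarith
  qed
  also have "card \<dots> = card drops"
    by (rule card_image) (auto simp: inj_on_def drops_def)
  finally show ?thesis
    using card_prefix_min_drops[of F L "L + L", OF step] prefix_min_periodic[of F L "int h", OF per]
    unfolding drops_def by simp
qed

subsection \<open>Double counting\<close>

lemma card_filter_eq_sum: "finite A \<Longrightarrow> card {x \<in> A. P x} = (\<Sum>x\<in>A. if P x then 1 else 0)"
  using sum.inter_filter[of A "\<lambda>_. 1::nat" P] by simp

lemma card_Collect_bij_betw:
  assumes bij: "bij_betw f X X" and "\<And>x. x \<in> X \<Longrightarrow> Q (f x) \<longleftrightarrow> P x"
  shows "card {x \<in> X. P x} = card {x \<in> X. Q x}"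
proof -
  have "f ` {x \<in> X. P x} = {x \<in> X. Q x}"
    using assms by (auto simp: bij_betw_def image_iff) (metis imageE)
  moreover have "inj_on f {x \<in> X. P x}"
    using bij by (auto simp: bij_betw_def intro: inj_on_subset)
  ultimately show ?thesis by (metis card_image)
qed

lemma sum_card_bij_betw_hits:
  assumes X: "finite X" and "finite D"
    and bij: "\<And>d. d \<in> D \<Longrightarrow> bij_betw (f d) X X" and P: "P \<subseteq> X"
  shows "(\<Sum>x\<in>X. card {d \<in> D. f d x \<in> P}) = card D * card P"
proof -
  have "(\<Sum>x\<in>X. card {d \<in> D. f d x \<in> P}) = (\<Sum>d\<in>D. card {x \<in> X. f d x \<in> P})"
    using X \<open>finite D\<close> by (simp add: card_filter_eq_sum sum.swap[of _ X])
  also have "\<dots> = (\<Sum>d\<in>D. card {x \<in> X. x \<in> P})"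
    using bij by (intro sum.cong refl card_Collect_bij_betw) auto
  also have "{x \<in> X. x \<in> P} = P" using P by blast
  finally show ?thesis by simp
qed

lemma words_apply_in: "a \<in> words n \<Longrightarrow> i \<in> {1..n} \<Longrightarrow> a i \<in> {1..n}"
  unfolding words_def by auto

lemma finite_words: "finite (words n)"
  unfolding words_def by (intro finite_PiE) auto

lemma run_eq_Max:
  assumes "1 \<in> a ` {1..n}"
  shows "run n a = Max {i \<in> {1..n}. {1..i} \<subseteq> a ` {1..n}}"
    and "run n a \<in> {i \<in> {1..n}. {1..i} \<subseteq> a ` {1..n}}"
proof -
  define I where "I = {i \<in> {1..n}. {1..i} \<subseteq> a ` {1..n}}"
  have "1 \<in> I" using assms unfolding I_def by auto
  then have "Max I \<in> I" by (intro Max_in) (auto simp: I_def)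
  moreover show "run n a = Max I" using assms unfolding run_def I_def by simp
  ultimately show "run n a \<in> I" by simp
qed

lemma le_run_iff:
  assumes "1 \<le> r" "r \<le> n"
  shows "r \<le> run n a \<longleftrightarrow> {1..r} \<subseteq> a ` {1..n}"
proof
  assume r: "r \<le> run n a"
  then have "1 \<in> a ` {1..n}" using \<open>1 \<le> r\<close> unfolding run_def by (auto split: if_splits)
  then have "{1..run n a} \<subseteq> a ` {1..n}" using run_eq_Max(2) by blast
  then show "{1..r} \<subseteq> a ` {1..n}" using r by auto
next
  assume r: "{1..r} \<subseteq> a ` {1..n}"
  then have "1 \<in> a ` {1..n}" using \<open>1 \<le> r\<close> by auto
  moreover have "r \<in> {i \<in> {1..n}. {1..i} \<subseteq> a ` {1..n}}" using r assms by auto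
  ultimately show "r \<le> run n a" by (simp add: run_eq_Max(1))
qed

lemma run_eq_iff:
  assumes "1 \<le> r" "r < n"
  shows "run n a = r \<longleftrightarrow> {1..r} \<subseteq> a ` {1..n} \<and> Suc r \<notin> a ` {1..n}"
proof -
  have "{1..Suc r} = insert (Suc r) {1..r}" by auto
  then show ?thesis using le_run_iff[of r n a] le_run_iff[of "Suc r" n a] assms
    by (simp add: le_antisym del: atLeastAtMost_iff) linarith
qed

lemma run_le: "run n a \<le> n"
  using run_eq_Max(2)[of a n] unfolding run_def by auto

lemma le_card_le_if_covers:
  fixes a :: "nat \<Rightarrow> nat"
  assumes "{1..i} \<subseteq> a ` {1..n}"
  shows "i \<le> card {j \<in> {1..n}. a j \<le> i}"
proof -
  have fin: "finite {j \<in> {1..n}. a j \<le> i}" by simp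
  have "{1..i} \<subseteq> a ` {j \<in> {1..n}. a j \<le> i}" using assms by fastforce
  then have "card {1..i} \<le> card (a ` {j \<in> {1..n}. a j \<le> i})" using fin by (intro card_mono) auto
  also have "\<dots> \<le> card {j \<in> {1..n}. a j \<le> i}" using fin by (rule card_image_le)
  finally show ?thesis by simp
qed

subsection \<open>Rotating the large values\<close>

definition covering_words :: "nat \<Rightarrow> nat \<Rightarrow> (nat \<Rightarrow> nat) set" where
  "covering_words n r = {a \<in> words n. {1..r} \<subseteq> a ` {1..n}}"

text \<open>The values \<open>1..r\<close> are fixed and the values \<open>r+1..n\<close> are rotated cyclically so that
  \<open>r+1+d\<close> becomes \<open>r+1\<close>.\<close>

definition cyclic_shift :: "nat \<Rightarrow> nat \<Rightarrow> nat \<Rightarrow> nat \<Rightarrow> nat" where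
  "cyclic_shift n r d v = (if v \<le> r then v else Suc r + (v - Suc r + (n - r - d)) mod (n - r))"

definition shift_word :: "nat \<Rightarrow> nat \<Rightarrow> nat \<Rightarrow> (nat \<Rightarrow> nat) \<Rightarrow> nat \<Rightarrow> nat" where
  "shift_word n r d a = restrict (cyclic_shift n r d \<circ> a) {1..n}"

lemma finite_covering_words: "finite (covering_words n r)"
  unfolding covering_words_def using finite_words by simp

lemma cyclic_shift_in:
  assumes "r < n" "v \<in> {1..n}"
  shows "cyclic_shift n r d v \<in> {1..n}"
proof -
  define m where "m = (v - Suc r + (n - r - d)) mod (n - r)"
  have "m < n - r" using \<open>r < n\<close> unfolding m_def by simp
  moreover have "cyclic_shift n r d v = (if v \<le> r then v else Suc r + m)"
    unfolding cyclic_shift_def m_def ..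
  ultimately show ?thesis using assms by auto
qed

lemma cyclic_shift_le_iff: "cyclic_shift n r d v \<le> r \<longleftrightarrow> v \<le> r"
  unfolding cyclic_shift_def by auto

lemma cyclic_shift_low: "v \<le> r \<Longrightarrow> cyclic_shift n r d v = v"
  unfolding cyclic_shift_def by auto

lemma cyclic_shift_eq_iff:
  assumes "d < n - r" "v \<in> {1..n}" "t < n - r"
  shows "cyclic_shift n r d v = Suc r + t \<longleftrightarrow> v = Suc r + (t + d) mod (n - r)"
proof (cases "v \<le> r")
  case False
  define L where "L = n - r"
  have "v - Suc r < L" "d < L" "t < L" using False assms unfolding L_def by auto
  have "cyclic_shift n r d v = Suc r + t \<longleftrightarrow> (v - Suc r + (L - d)) mod L = t"
    using False unfolding cyclic_shift_def L_def by simp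
  also have "\<dots> \<longleftrightarrow> v - Suc r = (t + d) mod L"
    using \<open>v - Suc r < L\<close> \<open>d < L\<close> \<open>t < L\<close>
    by (cases "d \<le> v - Suc r"; cases "t + d < L") (auto simp: mod_if)
  also have "\<dots> \<longleftrightarrow> v = Suc r + (t + d) mod (n - r)"
    using False unfolding L_def by auto
  finally show ?thesis .
qed (auto simp: cyclic_shift_def)

lemma inj_on_cyclic_shift:
  assumes "r < n" "d < n - r"
  shows "inj_on (cyclic_shift n r d) {1..n}"
proof (rule inj_onI)
  fix v w assume v: "v \<in> {1..n}" and w: "w \<in> {1..n}"
    and eq: "cyclic_shift n r d v = cyclic_shift n r d w"
  show "v = w"
  proof (cases "v \<le> r")
    case True
    then show ?thesis using eq cyclic_shift_le_iff cyclic_shift_low by metis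
  next
    case False
    define t where "t = (v - Suc r + (n - r - d)) mod (n - r)"
    have t: "t < n - r" unfolding t_def using assms by simp
    have "cyclic_shift n r d v = Suc r + t" using False unfolding cyclic_shift_def t_def by simp
    then show ?thesis using cyclic_shift_eq_iff[OF assms(2) v t] cyclic_shift_eq_iff[OF assms(2) w t] eq
      by simp
  qed
qed

lemma shift_word_apply: "i \<in> {1..n} \<Longrightarrow> shift_word n r d a i = cyclic_shift n r d (a i)"
  unfolding shift_word_def by simp

lemma shift_word_image: "shift_word n r d a ` {1..n} = cyclic_shift n r d ` a ` {1..n}"
  unfolding shift_word_def by auto

lemma shift_word_in_words: "a \<in> words n \<Longrightarrow> r < n \<Longrightarrow> shift_word n r d a \<in> words n"
  unfolding shift_word_def words_def using cyclic_shift_in by (auto simp: PiE_iff)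

lemma shift_word_in_covering_words:
  assumes "a \<in> covering_words n r" "r < n"
  shows "shift_word n r d a \<in> covering_words n r"
proof -
  have "{1..r} \<subseteq> cyclic_shift n r d ` a ` {1..n}"
  proof
    fix v assume "v \<in> {1..r}"
    then have "v \<in> a ` {1..n}" "cyclic_shift n r d v = v"
      using assms(1) cyclic_shift_low unfolding covering_words_def by auto
    then show "v \<in> cyclic_shift n r d ` a ` {1..n}" by (metis imageI)
  qed
  then have "{1..r} \<subseteq> shift_word n r d a ` {1..n}" by (simp only: shift_word_image)
  then show ?thesis using assms shift_word_in_words unfolding covering_words_def by blast
qed

lemma bij_betw_shift_word:
  assumes "r < n" "d < n - r"
  shows "bij_betw (shift_word n r d) (covering_words n r) (covering_words n r)"
proof -
  have "inj_on (shift_word n r d) (covering_words n r)"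
  proof (rule inj_onI)
    fix a b assume a: "a \<in> covering_words n r" and b: "b \<in> covering_words n r"
      and eq: "shift_word n r d a = shift_word n r d b"
    have "a i = b i" if i: "i \<in> {1..n}" for i
    proof (rule inj_onD[OF inj_on_cyclic_shift[OF assms]])
      show "cyclic_shift n r d (a i) = cyclic_shift n r d (b i)"
        using eq shift_word_apply[OF i] by metis
      show "a i \<in> {1..n}" "b i \<in> {1..n}"
        using a b i words_apply_in unfolding covering_words_def by auto
    qed
    moreover have "a \<in> {1..n} \<rightarrow>\<^sub>E {1..n}" "b \<in> {1..n} \<rightarrow>\<^sub>E {1..n}"
      using a b unfolding covering_words_def words_def by auto
    ultimately show "a = b" by (metis PiE_ext)
  qed
  moreover have "shift_word n r d ` covering_words n r \<subseteq> covering_words n r"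
    using shift_word_in_covering_words[OF _ assms(1)] by blast
  ultimately show ?thesis
    unfolding bij_betw_def using endo_inj_surj[OF finite_covering_words] by blast
qed

definition low_count :: "nat \<Rightarrow> nat \<Rightarrow> (nat \<Rightarrow> nat) \<Rightarrow> nat" where
  "low_count n r a = card {i \<in> {1..n}. a i \<le> r}"

definition high_mult :: "nat \<Rightarrow> nat \<Rightarrow> (nat \<Rightarrow> nat) \<Rightarrow> nat \<Rightarrow> nat" where
  "high_mult n r a y = card {j \<in> {1..n}. a j = Suc r + y}"

definition high_prefix :: "nat \<Rightarrow> nat \<Rightarrow> (nat \<Rightarrow> nat) \<Rightarrow> nat \<Rightarrow> nat" where
  "high_prefix n r a x = (\<Sum>y<x. high_mult n r a (y mod (n - r)))"

lemma card_shift_word_le: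
  assumes a: "a \<in> words n" and "r < n" "d < n - r" "t \<le> n - r"
  shows "card {j \<in> {1..n}. shift_word n r d a j \<le> r + t} + high_prefix n r a d
           = low_count n r a + high_prefix n r a (d + t)"
  using \<open>t \<le> n - r\<close>
proof (induction t)
  case 0
  have "{j \<in> {1..n}. shift_word n r d a j \<le> r} = {j \<in> {1..n}. a j \<le> r}"
    using shift_word_apply cyclic_shift_le_iff by auto
  then show ?case unfolding low_count_def by simp
next
  case (Suc t)
  then have t: "t < n - r" by simp
  have "{j \<in> {1..n}. shift_word n r d a j = Suc r + t}
      = {j \<in> {1..n}. a j = Suc r + (t + d) mod (n - r)}"
  proof -
    have "shift_word n r d a j = Suc r + t \<longleftrightarrow> a j = Suc r + (t + d) mod (n - r)"
      if "j \<in> {1..n}" for j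
      using shift_word_apply[OF that] cyclic_shift_eq_iff[OF \<open>d < n - r\<close> words_apply_in[OF a that] t]
      by simp
    then show ?thesis by blast
  qed
  then have new: "card {j \<in> {1..n}. shift_word n r d a j = Suc r + t} = high_mult n r a ((d + t) mod (n - r))"
    unfolding high_mult_def by (simp add: add.commute)
  have "card {j \<in> {1..n}. shift_word n r d a j \<le> r + Suc t} = card (
      {j \<in> {1..n}. shift_word n r d a j \<le> r + t} \<union> {j \<in> {1..n}. shift_word n r d a j = Suc r + t})"
    by (rule arg_cong[where f = card]) auto
  also have "\<dots> = card {j \<in> {1..n}. shift_word n r d a j \<le> r + t}
      + card {j \<in> {1..n}. shift_word n r d a j = Suc r + t}"
    by (rule card_Un_disjoint) auto
  finally have "card {j \<in> {1..n}. shift_word n r d a j \<le> r + Suc t} =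
      card {j \<in> {1..n}. shift_word n r d a j \<le> r + t} + high_mult n r a ((d + t) mod (n - r))"
    unfolding new .
  then show ?case using Suc.IH[OF less_imp_le[OF t]] unfolding high_prefix_def by simp
qed

lemma Suc_in_shift_word_image_iff:
  assumes a: "a \<in> words n" and "r < n" "d < n - r"
  shows "Suc r \<in> shift_word n r d a ` {1..n} \<longleftrightarrow> Suc r + d \<in> a ` {1..n}"
proof -
  have "cyclic_shift n r d v = Suc r + 0 \<longleftrightarrow> v = Suc r + d" if "v \<in> a ` {1..n}" for v
    using cyclic_shift_eq_iff[OF \<open>d < n - r\<close>, of v 0] that words_apply_in[OF a] assms by auto
  then show ?thesis unfolding shift_word_image by force
qed

lemma run_shift_word_eq_iff:
  assumes "a \<in> covering_words n r" "1 \<le> r" "r < n" "d < n - r"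
  shows "run n (shift_word n r d a) = r \<longleftrightarrow> Suc r + d \<notin> a ` {1..n}"
  using shift_word_in_covering_words[OF assms(1,3)] assms
    Suc_in_shift_word_image_iff[of a n r d] run_eq_iff[of r n]
  unfolding covering_words_def by auto

lemma parking_shift_word_iff:
  assumes a: "a \<in> covering_words n r" and "r < n" "d < n - r"
  shows "shift_word n r d a \<in> PF n \<longleftrightarrow>
    (\<forall>u\<in>{1..n - r}. r + u + high_prefix n r a d \<le> low_count n r a + high_prefix n r a (d + u))"
proof -
  define b where "b = shift_word n r d a"
  have aw: "a \<in> words n" using a unfolding covering_words_def by simp
  have bw: "b \<in> words n" and b_covers: "{1..r} \<subseteq> b ` {1..n}"
    using shift_word_in_covering_words[OF a \<open>r < n\<close>] unfolding b_def covering_words_def by auto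
  have count: "card {j \<in> {1..n}. b j \<le> r + u} + high_prefix n r a d
      = low_count n r a + high_prefix n r a (d + u)" if "u \<le> n - r" for u
    unfolding b_def using card_shift_word_le[OF aw \<open>r < n\<close> \<open>d < n - r\<close> that] .
  have "(\<forall>i\<in>{1..n}. i \<le> card {j \<in> {1..n}. b j \<le> i}) \<longleftrightarrow>
      (\<forall>u\<in>{1..n - r}. r + u \<le> card {j \<in> {1..n}. b j \<le> r + u})"
  proof
    assume high: "\<forall>u\<in>{1..n - r}. r + u \<le> card {j \<in> {1..n}. b j \<le> r + u}"
    show "\<forall>i\<in>{1..n}. i \<le> card {j \<in> {1..n}. b j \<le> i}"
    proof
      fix i assume i: "i \<in> {1..n}"
      show "i \<le> card {j \<in> {1..n}. b j \<le> i}"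
      proof (cases "i \<le> r")
        case True
        then show ?thesis using b_covers by (intro le_card_le_if_covers) auto
      next
        case False
        then have "i - r \<in> {1..n - r}" "i = r + (i - r)" using i by auto
        then show ?thesis using high by metis
      qed
    qed
  qed (use \<open>r < n\<close> in auto)
  also have "\<dots> \<longleftrightarrow> (\<forall>u\<in>{1..n - r}. r + u + high_prefix n r a d \<le> low_count n r a + high_prefix n r a (d + u))"
  proof (rule ball_cong[OF refl])
    fix u assume "u \<in> {1..n - r}"
    then show "r + u \<le> card {j \<in> {1..n}. b j \<le> r + u} \<longleftrightarrow>
        r + u + high_prefix n r a d \<le> low_count n r a + high_prefix n r a (d + u)"
      using count[of u] by auto
  qed
  finally show ?thesis using bw unfolding PF_def b_def by simp
qed

lemma high_prefix_add_period:
  "high_prefix n r a (x + (n - r)) = high_prefix n r a x + high_prefix n r a (n - r)"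
proof (induction x)
  case (Suc x)
  then show ?case unfolding high_prefix_def by simp
qed (simp add: high_prefix_def)

lemma high_prefix_period_eq:
  assumes a: "a \<in> words n" and "r < n"
  shows "high_prefix n r a (n - r) + low_count n r a = n"
proof -
  have "{j \<in> {1..n}. shift_word n r 0 a j \<le> r + (n - r)} = {1..n}"
    using words_apply_in[OF shift_word_in_words[OF a \<open>r < n\<close>]] \<open>r < n\<close> by auto
  then show ?thesis
    using card_shift_word_le[OF a \<open>r < n\<close>, of 0 "n - r"] \<open>r < n\<close> by (simp add: high_prefix_def)
qed

lemma low_count_ge: "a \<in> covering_words n r \<Longrightarrow> r \<le> low_count n r a"
  unfolding low_count_def covering_words_def using le_card_le_if_covers[of r a n] by simp

text \<open>For the rotation \<open>b\<close> of \<open>a\<close> by \<open>d\<close>, the parking condition at \<open>r + u\<close> and the condition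
  \<open>run b = r\<close> (no letter \<open>r + 1 + d\<close> in \<open>a\<close>) are the conditions of the cycle lemma at \<open>d\<close> for the
  walk \<open>F\<close>, which drops by \<open>k - r\<close> over a period.\<close>

lemma card_shifts_parking:
  assumes "1 \<le> r" "r < n" and a: "a \<in> covering_words n r"
  shows "card {d \<in> {..<n - r}. shift_word n r d a \<in> {b \<in> PF n. run n b = r}} = low_count n r a - r"
proof -
  define L where "L = n - r"
  define h where "h = low_count n r a - r"
  define F where "F x = int (high_prefix n r a x) - int x" for x
  have aw: "a \<in> words n" using a unfolding covering_words_def by simp
  have kr: "r \<le> low_count n r a" using low_count_ge[OF a] .
  have F_Suc: "F (Suc x) = F x + int (high_mult n r a (x mod L)) - 1" for x
    unfolding F_def high_prefix_def L_def by simp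
  have F_period: "F (x + L) = F x - int h" for x
    using high_prefix_add_period[of n r a x] high_prefix_period_eq[OF aw \<open>r < n\<close>] kr
    unfolding F_def h_def L_def by simp
  have F_bound_iff: "F d - int h \<le> F (d + u) \<longleftrightarrow>
      r + u + high_prefix n r a d \<le> low_count n r a + high_prefix n r a (d + u)" for d u
    using kr unfolding F_def h_def by linarith
  have "shift_word n r d a \<in> {b \<in> PF n. run n b = r}
      \<longleftrightarrow> F (Suc d) < F d \<and> (\<forall>u\<in>{1..L}. F d - int h \<le> F (d + u))" if "d < L" for d
  proof -
    have "high_mult n r a d = 0 \<longleftrightarrow> {j \<in> {1..n}. a j = Suc r + d} = {}"
      unfolding high_mult_def by simp
    also have "\<dots> \<longleftrightarrow> Suc r + d \<notin> a ` {1..n}" by (auto intro: rev_image_eqI)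
    finally have "run n (shift_word n r d a) = r \<longleftrightarrow> high_mult n r a d = 0"
      using run_shift_word_eq_iff[OF a \<open>1 \<le> r\<close> \<open>r < n\<close>, of d] \<open>d < L\<close>
      unfolding L_def by blast
    also have "\<dots> \<longleftrightarrow> F (Suc d) < F d" using F_Suc[of d] \<open>d < L\<close> by auto
    finally show ?thesis
      using parking_shift_word_iff[OF a \<open>r < n\<close>, of d] \<open>d < L\<close> F_bound_iff
      unfolding L_def by auto
  qed
  then have "{d \<in> {..<n - r}. shift_word n r d a \<in> {b \<in> PF n. run n b = r}}
      = {d \<in> {..<L}. F (Suc d) < F d \<and> (\<forall>u\<in>{1..L}. F d - int h \<le> F (d + u))}"
    unfolding L_def by auto
  also have "card \<dots> = h"
    using F_Suc F_period by (intro cycle_lemma) auto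
  finally show ?thesis unfolding h_def .
qed

lemma card_gaps_above:
  assumes "{1..r} \<subseteq> S" "S \<subseteq> {1..n}"
  shows "card {d \<in> {..<n - r}. Suc r + d \<notin> S} = n - card S"
proof -
  have "{1..n} - S = (\<lambda>d. Suc r + d) ` {d \<in> {..<n - r}. Suc r + d \<notin> S}"
  proof (rule set_eqI, rule iffI)
    fix v assume "v \<in> {1..n} - S"
    then have "r < v" "v \<le> n" "v \<notin> S" using assms(1) by force+
    then show "v \<in> (\<lambda>d. Suc r + d) ` {d \<in> {..<n - r}. Suc r + d \<notin> S}"
      by (intro image_eqI[of _ _ "v - Suc r"]) auto
  qed (use assms(1) in auto)
  moreover have "inj_on (\<lambda>d. Suc r + d) {d \<in> {..<n - r}. Suc r + d \<notin> S}"
    by (simp add: inj_on_def)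
  ultimately have "card ({1..n} - S) = card {d \<in> {..<n - r}. Suc r + d \<notin> S}"
    by (simp only: card_image)
  moreover have "card ({1..n} - S) = n - card S"
    using assms(2) by (simp add: card_Diff_subset finite_subset)
  ultimately show ?thesis by simp
qed

lemma card_shifts_rook:
  assumes "1 \<le> r" "r < n" and a: "a \<in> covering_words n r"
  shows "card {d \<in> {..<n - r}. shift_word n r d a \<in> {b \<in> RW n. run n b = r}}
           = (if a 1 \<le> r then n - card (a ` {1..n}) else 0)"
proof -
  have aw: "a \<in> words n" and covers: "{1..r} \<subseteq> a ` {1..n}"
    using a unfolding covering_words_def by auto
  have "shift_word n r d a \<in> {b \<in> RW n. run n b = r} \<longleftrightarrow> a 1 \<le> r \<and> Suc r + d \<notin> a ` {1..n}"
    if "d < n - r" for d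
    using run_shift_word_eq_iff[OF a \<open>1 \<le> r\<close> \<open>r < n\<close> that] shift_word_apply[of 1 n r d a]
      shift_word_in_words[OF aw \<open>r < n\<close>] cyclic_shift_le_iff \<open>r < n\<close>
    unfolding RW_def by auto
  then have "{d \<in> {..<n - r}. shift_word n r d a \<in> {b \<in> RW n. run n b = r}}
      = {d \<in> {..<n - r}. a 1 \<le> r \<and> Suc r + d \<notin> a ` {1..n}}"
    by auto
  moreover have "a ` {1..n} \<subseteq> {1..n}" using words_apply_in[OF aw] by auto
  ultimately show ?thesis using card_gaps_above[OF covers] by simp
qed

subsection \<open>Symmetries of covering words\<close>

lemma transpose_positions_in_covering_words:
  assumes "a \<in> covering_words n r" "i \<in> {1..n}" "j \<in> {1..n}"
  shows "restrict (a \<circ> transpose i j) {1..n} \<in> covering_words n r"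
    and "restrict (restrict (a \<circ> transpose i j) {1..n} \<circ> transpose i j) {1..n} = a"
proof -
  have swap_in: "transpose i j k \<in> {1..n}" if "k \<in> {1..n}" for k
    using that assms(2,3) by (auto simp: transpose_def)
  have "restrict (a \<circ> transpose i j) {1..n} ` {1..n} = a ` transpose i j ` {1..n}"
    by (simp only: image_restrict_eq image_comp)
  also have "transpose i j ` {1..n} = {1..n}" using assms(2,3) by (intro transpose_image_eq) simp
  finally have "{1..r} \<subseteq> restrict (a \<circ> transpose i j) {1..n} ` {1..n}"
    using assms(1) unfolding covering_words_def by simp
  moreover have "restrict (a \<circ> transpose i j) {1..n} \<in> words n"
    using assms(1) words_apply_in[OF _ swap_in] unfolding covering_words_def words_def
    by (simp add: restrict_PiE_iff)
  ultimately show "restrict (a \<circ> transpose i j) {1..n} \<in> covering_words n r"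
    unfolding covering_words_def by simp
  have "a \<in> extensional {1..n}" using assms(1) unfolding covering_words_def words_def by (simp add: PiE_iff)
  show "restrict (restrict (a \<circ> transpose i j) {1..n} \<circ> transpose i j) {1..n} = a"
  proof (rule extensionalityI[where A = "{1..n}"])
    fix x assume "x \<in> {1..n}"
    then show "restrict (restrict (a \<circ> transpose i j) {1..n} \<circ> transpose i j) {1..n} x = a x"
      using swap_in[OF \<open>x \<in> {1..n}\<close>] by simp
  qed (rule restrict_extensional, fact)
qed

lemma bij_betw_transpose_positions:
  assumes "i \<in> {1..n}" "j \<in> {1..n}"
  shows "bij_betw (\<lambda>a. restrict (a \<circ> transpose i j) {1..n}) (covering_words n r) (covering_words n r)"
proof -
  have maps: "(\<lambda>a. restrict (a \<circ> transpose i j) {1..n}) \<in> covering_words n r \<rightarrow> covering_words n r"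
    using transpose_positions_in_covering_words(1)[OF _ assms] by blast
  have inv: "restrict (restrict (a \<circ> transpose i j) {1..n} \<circ> transpose i j) {1..n} = a"
    if "a \<in> covering_words n r" for a
    using transpose_positions_in_covering_words(2)[OF that assms] .
  show ?thesis by (rule bij_betwI[OF maps maps]) (erule inv)+
qed

lemma sum_low_count:
  assumes "1 \<le> n"
  shows "(\<Sum>a\<in>covering_words n r. low_count n r a) = n * card {a \<in> covering_words n r. a 1 \<le> r}"
proof -
  have "card {a \<in> covering_words n r. a i \<le> r} = card {a \<in> covering_words n r. a 1 \<le> r}"
    if "i \<in> {1..n}" for i
  proof (rule card_Collect_bij_betw[OF bij_betw_transpose_positions[of 1 n i]])
    show "1 \<in> {1..n}" "i \<in> {1..n}" using assms that by auto
    then show "restrict (a \<circ> transpose 1 i) {1..n} 1 \<le> r \<longleftrightarrow> a i \<le> r" for a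
      by simp
  qed
  then have "(\<Sum>i\<in>{1..n}. card {a \<in> covering_words n r. a i \<le> r})
      = (\<Sum>i\<in>{1..n}. card {a \<in> covering_words n r. a 1 \<le> r})"
    by (rule sum.cong[OF refl])
  moreover have "(\<Sum>a\<in>covering_words n r. low_count n r a)
      = (\<Sum>a\<in>covering_words n r. \<Sum>i\<in>{1..n}. if a i \<le> r then 1 else 0)"
    unfolding low_count_def by (intro sum.cong refl card_filter_eq_sum) simp
  moreover have "\<dots> = (\<Sum>i\<in>{1..n}. \<Sum>a\<in>covering_words n r. if a i \<le> r then 1 else 0)"
    by (rule sum.swap)
  moreover have "\<dots> = (\<Sum>i\<in>{1..n}. card {a \<in> covering_words n r. a i \<le> r})"
    by (intro sum.cong refl card_filter_eq_sum[symmetric] finite_covering_words)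
  ultimately show ?thesis by simp
qed

lemma transpose_values_in_covering_words:
  assumes a: "a \<in> covering_words n r" and "u \<in> a ` {1..n}" "w \<in> a ` {1..n}"
  shows "restrict (transpose u w \<circ> a) {1..n} ` {1..n} = a ` {1..n}"
    and "restrict (transpose u w \<circ> a) {1..n} \<in> covering_words n r"
    and "restrict (transpose u w \<circ> restrict (transpose u w \<circ> a) {1..n}) {1..n} = a"
proof -
  have aw: "a \<in> {1..n} \<rightarrow>\<^sub>E {1..n}" using a unfolding covering_words_def words_def by simp
  have "restrict (transpose u w \<circ> a) {1..n} ` {1..n} = transpose u w ` a ` {1..n}"
    by (simp only: image_restrict_eq image_comp)
  also have "\<dots> = a ` {1..n}" using assms(2,3) by (intro transpose_image_eq) simp
  finally show image_eq: "restrict (transpose u w \<circ> a) {1..n} ` {1..n} = a ` {1..n}" .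
  have "restrict (transpose u w \<circ> a) {1..n} i \<in> a ` {1..n}" if "i \<in> {1..n}" for i
    unfolding image_eq[symmetric] using that by (rule imageI)
  moreover have "a ` {1..n} \<subseteq> {1..n}" using aw by auto
  ultimately have "restrict (transpose u w \<circ> a) {1..n} i \<in> {1..n}" if "i \<in> {1..n}" for i
    using that by blast
  then have "restrict (transpose u w \<circ> a) {1..n} \<in> words n"
    unfolding words_def by (simp add: restrict_PiE_iff)
  then show "restrict (transpose u w \<circ> a) {1..n} \<in> covering_words n r"
    using a image_eq unfolding covering_words_def by simp
  show "restrict (transpose u w \<circ> restrict (transpose u w \<circ> a) {1..n}) {1..n} = a"
  proof (rule extensionalityI[where A = "{1..n}"])
    show "a \<in> extensional {1..n}" using aw by (simp add: PiE_iff)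
  qed simp_all
qed

text \<open>The inverse sends \<open>(b, v)\<close> to \<open>b\<close> with the values \<open>b\<^sub>1\<close> and \<open>v\<close> interchanged,
  paired with \<open>b\<^sub>1\<close>.\<close>

lemma bij_betw_swap_first_value:
  assumes "1 \<le> n"
  shows "bij_betw (\<lambda>(a, u). (restrict (transpose u (a 1) \<circ> a) {1..n}, a 1))
           (covering_words n r \<times> {1..r}) (SIGMA a:{a \<in> covering_words n r. a 1 \<le> r}. a ` {1..n})"
    (is "bij_betw ?f ?A ?B")
proof -
  define swap :: "nat \<Rightarrow> nat \<Rightarrow> (nat \<Rightarrow> nat) \<Rightarrow> nat \<Rightarrow> nat"
    where "swap u w a = restrict (transpose u w \<circ> a) {1..n}" for u w a
  define f :: "(nat \<Rightarrow> nat) \<times> nat \<Rightarrow> (nat \<Rightarrow> nat) \<times> nat"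
    where "f = (\<lambda>(a, u). (swap u (a 1) a, a 1))"
  have f_eq: "?f = f" unfolding f_def swap_def ..
  define g :: "(nat \<Rightarrow> nat) \<times> nat \<Rightarrow> (nat \<Rightarrow> nat) \<times> nat"
    where "g = (\<lambda>(b, v). (swap (b 1) v b, b 1))"
  define A where "A = covering_words n r \<times> {1..r}"
  define B where "B = (SIGMA a:{a \<in> covering_words n r. a 1 \<le> r}. a ` {1..n})"
  have one: "(1::nat) \<in> {1..n}" using assms by simp
  have swap_1: "swap u (a 1) a 1 = u" "swap (a 1) u a 1 = u" for u a
    using one unfolding swap_def by simp_all
  have swap_props:
    "swap u w a ` {1..n} = a ` {1..n}" "swap u w a \<in> covering_words n r" "swap u w (swap u w a) = a"
    if "a \<in> covering_words n r" "u \<in> a ` {1..n}" "w \<in> a ` {1..n}" for u w a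
    using transpose_values_in_covering_words[OF that] unfolding swap_def by simp_all
  have in_A: "a \<in> covering_words n r" "u \<in> a ` {1..n}" "u \<le> r" if "(a, u) \<in> A" for a u
    using that unfolding A_def covering_words_def by auto
  have in_B: "b \<in> covering_words n r" "b 1 \<le> r" "v \<in> b ` {1..n}" if "(b, v) \<in> B" for b v
    using that unfolding B_def by auto
  have "bij_betw f A B"
  proof (rule bij_betwI[where g = g])
    show "f \<in> A \<rightarrow> B"
    proof
      fix x assume "x \<in> A"
      then obtain a u where x: "x = (a, u)" and "(a, u) \<in> A" by (cases x) auto
      note a = in_A[OF \<open>(a, u) \<in> A\<close>]
      have "a 1 \<in> a ` {1..n}" using one by simp
      then show "f x \<in> B"
        using swap_props[OF a(1,2) \<open>a 1 \<in> _\<close>] swap_1 a unfolding x f_def B_def by simp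
    qed
    show "g \<in> B \<rightarrow> A"
    proof
      fix y assume "y \<in> B"
      then obtain b v where y: "y = (b, v)" and "(b, v) \<in> B" by (cases y) auto
      note b = in_B[OF \<open>(b, v) \<in> B\<close>]
      have "b 1 \<in> {1..n}" using b(1) words_apply_in one unfolding covering_words_def by blast
      then show "g y \<in> A"
        using swap_props(2)[OF b(1) _ b(3), of "b 1"] b(2) unfolding y g_def A_def by simp
    qed
    show "g (f x) = x" if x_in: "x \<in> A" for x
    proof -
      obtain a u where x: "x = (a, u)" and "(a, u) \<in> A" using x_in by (cases x) auto
      note a = in_A[OF \<open>(a, u) \<in> A\<close>]
      have "a 1 \<in> a ` {1..n}" using one by simp
      then show ?thesis
        using swap_props(3)[OF a(1,2)] swap_1 unfolding x f_def g_def by simp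
    qed
    show "f (g y) = y" if y_in: "y \<in> B" for y
    proof -
      obtain b v where y: "y = (b, v)" and "(b, v) \<in> B" using y_in by (cases y) auto
      note b = in_B[OF \<open>(b, v) \<in> B\<close>]
      have "b 1 \<in> b ` {1..n}" using one by simp
      then have "swap (b 1) v (swap (b 1) v b) = b" using swap_props(3)[OF b(1) _ b(3)] by simp
      then show ?thesis using swap_1 unfolding y f_def g_def by (simp add: transpose_commute swap_def)
    qed
  qed
  then show ?thesis unfolding f_eq A_def B_def .
qed

lemma sum_card_image:
  assumes "1 \<le> n"
  shows "r * card (covering_words n r)
           = (\<Sum>a\<in>{a \<in> covering_words n r. a 1 \<le> r}. card (a ` {1..n}))"
proof -
  have "card (covering_words n r \<times> {1..r})
      = card (SIGMA a:{a \<in> covering_words n r. a 1 \<le> r}. a ` {1..n})"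
    using bij_betw_swap_first_value[OF assms] by (rule bij_betw_same_card)
  then show ?thesis using finite_covering_words by (simp add: card_cartesian_product mult.commute)
qed

subsection \<open>Counting by run\<close>

lemma covering_words_if_run_eq:
  assumes "a \<in> words n" "1 \<le> r" "r \<le> n" "run n a = r"
  shows "a \<in> covering_words n r"
  using assms le_run_iff[of r n a] unfolding covering_words_def by simp

lemma card_PF_run_eq:
  assumes "1 \<le> r" "r < n"
  shows "(n - r) * card {b \<in> PF n. run n b = r}
           = n * card {a \<in> covering_words n r. a 1 \<le> r} - r * card (covering_words n r)"
proof -
  let ?X = "covering_words n r"
  have sub: "{b \<in> PF n. run n b = r} \<subseteq> ?X"
    using covering_words_if_run_eq assms unfolding PF_def by auto
  have bij: "bij_betw (shift_word n r d) ?X ?X" if "d \<in> {..<n - r}" for d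
    using bij_betw_shift_word \<open>r < n\<close> that by simp
  have "(n - r) * card {b \<in> PF n. run n b = r}
      = (\<Sum>a\<in>?X. card {d \<in> {..<n - r}. shift_word n r d a \<in> {b \<in> PF n. run n b = r}})"
    using sum_card_bij_betw_hits[of ?X "{..<n - r}" "shift_word n r", OF finite_covering_words _ bij sub]
    by simp
  also have "\<dots> = (\<Sum>a\<in>?X. low_count n r a - r)"
    using card_shifts_parking assms by (intro sum.cong) auto
  also have "\<dots> = (\<Sum>a\<in>?X. low_count n r a) - r * card ?X"
    using low_count_ge by (simp add: sum_subtractf_nat mult.commute)
  also have "\<dots> = n * card {a \<in> ?X. a 1 \<le> r} - r * card ?X"
    using sum_low_count assms by simp
  finally show ?thesis .
qed

lemma card_RW_run_eq:
  assumes "1 \<le> r" "r < n"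
  shows "(n - r) * card {b \<in> RW n. run n b = r}
           = n * card {a \<in> covering_words n r. a 1 \<le> r} - r * card (covering_words n r)"
proof -
  let ?X = "covering_words n r"
  have image_le: "card (a ` {1..n}) \<le> n" for a :: "nat \<Rightarrow> nat"
    using card_image_le[of "{1..n}" a] by simp
  have sub: "{b \<in> RW n. run n b = r} \<subseteq> ?X"
    using covering_words_if_run_eq assms unfolding RW_def by auto
  have bij: "bij_betw (shift_word n r d) ?X ?X" if "d \<in> {..<n - r}" for d
    using bij_betw_shift_word \<open>r < n\<close> that by simp
  have "(n - r) * card {b \<in> RW n. run n b = r}
      = (\<Sum>a\<in>?X. card {d \<in> {..<n - r}. shift_word n r d a \<in> {b \<in> RW n. run n b = r}})"
    using sum_card_bij_betw_hits[of ?X "{..<n - r}" "shift_word n r", OF finite_covering_words _ bij sub]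
    by simp
  also have "\<dots> = (\<Sum>a\<in>?X. if a 1 \<le> r then n - card (a ` {1..n}) else 0)"
    using card_shifts_rook assms by (intro sum.cong) auto
  also have "\<dots> = (\<Sum>a\<in>{a \<in> ?X. a 1 \<le> r}. n - card (a ` {1..n}))"
    by (rule sum.inter_filter[symmetric, OF finite_covering_words])
  also have "\<dots> = n * card {a \<in> ?X. a 1 \<le> r} - (\<Sum>a\<in>{a \<in> ?X. a 1 \<le> r}. card (a ` {1..n}))"
    using image_le by (simp add: sum_subtractf_nat mult.commute)
  also have "\<dots> = n * card {a \<in> ?X. a 1 \<le> r} - r * card ?X"
    using sum_card_image assms by simp
  finally show ?thesis .
qed

lemma run_pos_if_PF:
  assumes "a \<in> PF n" "1 \<le> n"
  shows "0 < run n a"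
proof -
  have "1 \<le> card {j \<in> {1..n}. a j \<le> 1}" using assms unfolding PF_def by auto
  then obtain j where "j \<in> {1..n}" "a j \<le> 1" by (metis (no_types, lifting) Collect_empty_eq card.empty not_one_le_zero)
  moreover have "a j \<in> {1..n}" using assms(1) calculation(1) words_apply_in unfolding PF_def by blast
  ultimately have "{1..1} \<subseteq> a ` {1..n}" by force
  then show ?thesis using le_run_iff[of 1 n a] assms(2) by simp
qed

lemma run_pos_if_RW:
  assumes "a \<in> RW n" "1 \<le> n"
  shows "0 < run n a"
  using assms words_apply_in[of a n 1] unfolding RW_def by auto

lemma card_PF_run_eq_card_RW_run_eq:
  assumes "1 \<le> n" "r \<le> n"
  shows "card {b \<in> PF n. run n b = r} = card {b \<in> RW n. run n b = r}"
proof -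
  consider "r = 0" | "1 \<le> r" "r < n" | "r = n" using assms by linarith
  then show ?thesis
  proof cases
    case 1
    have "{b \<in> PF n. run n b = r} = {}" "{b \<in> RW n. run n b = r}= {}"
      using run_pos_if_PF[OF _ assms(1)] run_pos_if_RW[OF _ assms(1)] 1 by fastforce+
    then show ?thesis by (simp only:)
  next
    case 2
    then have "(n - r) * card {b \<in> PF n. run n b = r} = (n - r) * card {b \<in> RW n. run n b = r}"
      using card_PF_run_eq card_RW_run_eq by simp
    then show ?thesis using \<open>r < n\<close> by simp
  next
    case 3
    have "b \<in> PF n \<and> b \<in> RW n" if "b \<in> words n" "run n b = n" for b
    proof -
      have covers: "{1..n} \<subseteq> b ` {1..n}" using that le_run_iff[of n n b] assms by simp
      have "{1..i} \<subseteq> b ` {1..n}" if "i \<in> {1..n}" for i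
        using that by (intro subset_trans[OF _ covers]) auto
      then have "\<forall>i\<in>{1..n}. i \<le> card {j \<in> {1..n}. b j \<le> i}"
        using le_card_le_if_covers by blast
      then show ?thesis using that words_apply_in[OF that(1), of 1] assms unfolding PF_def RW_def by auto
    qed
    then have "{b \<in> PF n. run n b = r} = {b \<in> RW n. run n b = r}"
      using 3 unfolding PF_def RW_def by blast
    then show ?thesis by simp
  qed
qed

lemma sum_power_eq_sum_card_fibres:
  fixes t :: "'a :: comm_semiring_1"
  assumes "finite A" "\<And>a. a \<in> A \<Longrightarrow> f a \<le> n"
  shows "(\<Sum>a\<in>A. t ^ f a) = (\<Sum>r\<le>n. of_nat (card {a \<in> A. f a = r}) * t ^ r)"
proof -
  have "(\<Sum>a\<in>A. t ^ f a) = (\<Sum>r\<le>n. \<Sum>a\<in>{a \<in> A. f a = r}. t ^ f a)"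
    using sum.group[OF assms(1) finite_atMost[of n], of f "\<lambda>a. t ^ f a"] assms(2) by fastforce
  also have "\<dots> = (\<Sum>r\<le>n. of_nat (card {a \<in> A. f a = r}) * t ^ r)"
    by (intro sum.cong refl) simp
  finally show ?thesis .
qed

theorem theorem4p11:
  fixes n :: nat and t :: "'a :: comm_semiring_1"
  assumes "n \<ge> 1"
  shows "(\<Sum>a\<in>PF n. t ^ run n a) = (\<Sum>a\<in>RW n. t ^ run n a)"
proof -
  have fin: "finite (PF n)" "finite (RW n)"
    using finite_words by (auto simp: PF_def RW_def)
  have "(\<Sum>a\<in>PF n. t ^ run n a) = (\<Sum>r\<le>n. of_nat (card {a \<in> PF n. run n a = r}) * t ^ r)"
    by (intro sum_power_eq_sum_card_fibres fin run_le)
  also have "\<dots> = (\<Sum>r\<le>n. of_nat (card {a \<in> RW n. run n a = r}) * t ^ r)"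
    using card_PF_run_eq_card_RW_run_eq assms by simp
  also have "\<dots> = (\<Sum>a\<in>RW n. t ^ run n a)"
    by (intro sum_power_eq_sum_card_fibres[symmetric] fin run_le)
  finally show ?thesis .
qed

end
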